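(* Every $\mathcal C$-pair is an augmentation of a basic $\mathcal C$-pair along an acceptable matching.
   Context: $\mathcal C$ is the class of $(P_4,C_4,2P_3)$-free graphs. For a $(P_4,C_4)$-free graph $H$ define a rooted forest $T(H)$ whose nodes are cliques partitioning $V(H)$: if $H$ is disconnected, $T(H)$ is the union of the trees of its components; if $H$ is connected and a clique, $T(H)$ is the single node $V(H)$; otherwise the set $U(H)$ of universal vertices of $H$ is non-empty, and $T(H)$ has root $U(H)$ whose children are the roots of $T(H_1),\dots,T(H_k)$ where $H_1,\dots,H_k$ are the components of $H\setminus U(H)$. A vertex $y$ is a descendant of $x$ if the node containing $y$ is a proper descendant of the node containing $x$. A member $H$ of $\mathcal C$ is basic if every node of $T(H)$ has size 1. A graph $G$ is a $\mathcal C$-pair if $G$ is $P_6$-free and chordal and $V(G)$ is partitioned into sets $X,A$ such that $A$ is a clique, $G[X]\in\mathcal C$, every vertex of $X$ has a neighbor in $A$, and any two non-adjacent vertices of $X$ have no common neighbor in $A$. $G$ is a basic $\mathcal C$-pair if $V(G)=X\cup A$ where $G[X]$ is a basic member of $\mathcal C$ with vertices $x_1,\dots,x_k$, $A=\{a_0,a_1,\dots,a_k\}$ is a clique, and for each $i$: if $x_i$ is simplicial in $G[X]$ then $N_A(x_i)=\{a_i\}$, and otherwise $N_A(x_i)$ is $\{a_i\}$ together with the union of $N_A(y)$ over all descendants $y$ of $x_i$ in $T(G[X])$. In a basic $\mathcal C$-pair a matching $M$ is acceptable if there is a clique $\{x_{i_1},\dots,x_{i_h}\}$ of $G[X]$ with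 $M=\{x_{i_1}a_{i_1},\dots,x_{i_h}a_{i_h}\}$. Two disjoint sets $P,R$ form a graded pair if for any $p,p'\in P$, $N(p)\cap R\subseteq N(p')\cap R$ or $N(p')\cap R\subseteq N(p)\cap R$. Given a graph $H$ and a matching $M$ of $H$, an augmentation of $H$ along $M$ is any graph whose vertex set is partitioned into $|V(H)|$ cliques $Q_v$ ($v\in V(H)$) such that $Q_u$ is complete to $Q_v$ if $uv\in E(H)\setminus M$, there are no edges between $Q_u$ and $Q_v$ if $uv\notin E(H)$, and $\{Q_u,Q_v\}$ is a graded pair if $uv\in M$. *)

theory Defs
  imports Main
begin

definition graph :: "'a set \<Rightarrow> ('a \<Rightarrow> 'a \<Rightarrow> bool) \<Rightarrow> bool" where
  "graph V E \<longleftrightarrow> finite V \<and> (\<forall>u v. E u v \<longrightarrow> u \<in> V \<and> v \<in> V \<and> u \<noteq> v \<and> E v u)"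

definition has_induced :: "'a set \<Rightarrow> ('a \<Rightarrow> 'a \<Rightarrow> bool) \<Rightarrow> nat \<Rightarrow> (nat \<Rightarrow> nat \<Rightarrow> bool) \<Rightarrow> bool" where
  "has_induced S E n R \<longleftrightarrow> (\<exists>f. inj_on f {..<n} \<and> f ` {..<n} \<subseteq> S \<and>
      (\<forall>i<n. \<forall>j<n. i \<noteq> j \<longrightarrow> (E (f i) (f j) \<longleftrightarrow> R i j)))"

definition path_rel :: "nat \<Rightarrow> nat \<Rightarrow> bool" where
  "path_rel i j \<longleftrightarrow> i + 1 = j \<or> j + 1 = i"

definition cycle_rel :: "nat \<Rightarrow> nat \<Rightarrow> nat \<Rightarrow> bool" where
  "cycle_rel n i j \<longleftrightarrow> i + 1 = j \<or> j + 1 = i \<or> (i = 0 \<and> j = n - 1) \<or> (j = 0 \<and> i = n - 1)"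

definition twoP3_rel :: "nat \<Rightarrow> nat \<Rightarrow> bool" where
  "twoP3_rel i j \<longleftrightarrow> path_rel i j \<and> ((i < 3 \<and> j < 3) \<or> (3 \<le> i \<and> 3 \<le> j))"

definition P_free :: "nat \<Rightarrow> 'a set \<Rightarrow> ('a \<Rightarrow> 'a \<Rightarrow> bool) \<Rightarrow> bool" where
  "P_free n S E \<longleftrightarrow> \<not> has_induced S E n path_rel"

definition C_free :: "nat \<Rightarrow> 'a set \<Rightarrow> ('a \<Rightarrow> 'a \<Rightarrow> bool) \<Rightarrow> bool" where
  "C_free n S E \<longleftrightarrow> \<not> has_induced S E n (cycle_rel n)"

definition twoP3_free :: "'a set \<Rightarrow> ('a \<Rightarrow> 'a \<Rightarrow> bool) \<Rightarrow> bool" where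
  "twoP3_free S E \<longleftrightarrow> \<not> has_induced S E 6 twoP3_rel"

definition chordal :: "'a set \<Rightarrow> ('a \<Rightarrow> 'a \<Rightarrow> bool) \<Rightarrow> bool" where
  "chordal S E \<longleftrightarrow> (\<forall>n\<ge>4. C_free n S E)"

definition in_C :: "'a set \<Rightarrow> ('a \<Rightarrow> 'a \<Rightarrow> bool) \<Rightarrow> bool" where
  "in_C S E \<longleftrightarrow> P_free 4 S E \<and> C_free 4 S E \<and> twoP3_free S E"

definition clique_in :: "'a set \<Rightarrow> ('a \<Rightarrow> 'a \<Rightarrow> bool) \<Rightarrow> bool" where
  "clique_in S E \<longleftrightarrow> (\<forall>u\<in>S. \<forall>v\<in>S. u \<noteq> v \<longrightarrow> E u v)"

definition connected_in :: "'a set \<Rightarrow> ('a \<Rightarrow> 'a \<Rightarrow> bool) \<Rightarrow> bool" where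
  "connected_in S E \<longleftrightarrow> S \<noteq> {} \<and>
     (\<forall>u\<in>S. \<forall>v\<in>S. (\<lambda>a b. a \<in> S \<and> b \<in> S \<and> E a b)\<^sup>*\<^sup>* u v)"

definition component :: "'a set \<Rightarrow> ('a \<Rightarrow> 'a \<Rightarrow> bool) \<Rightarrow> 'a set \<Rightarrow> bool" where
  "component S E C \<longleftrightarrow> C \<subseteq> S \<and> connected_in C E \<and> (\<forall>u\<in>C. \<forall>v\<in>S - C. \<not> E u v)"

definition universal :: "'a set \<Rightarrow> ('a \<Rightarrow> 'a \<Rightarrow> bool) \<Rightarrow> 'a set" where
  "universal S E = {u \<in> S. \<forall>v\<in>S. v \<noteq> u \<longrightarrow> E u v}"

text \<open>The nodes of the rooted forest T(G[S]), following the recursive definition.\<close>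
inductive tnode :: "('a \<Rightarrow> 'a \<Rightarrow> bool) \<Rightarrow> 'a set \<Rightarrow> 'a set \<Rightarrow> bool" for E where
  disc: "\<not> connected_in S E \<Longrightarrow> component S E C \<Longrightarrow> tnode E C N \<Longrightarrow> tnode E S N"
| clq: "connected_in S E \<Longrightarrow> clique_in S E \<Longrightarrow> tnode E S S"
| root: "connected_in S E \<Longrightarrow> \<not> clique_in S E \<Longrightarrow> tnode E S (universal S E)"
| sub: "connected_in S E \<Longrightarrow> \<not> clique_in S E \<Longrightarrow> component (S - universal S E) E C
          \<Longrightarrow> tnode E C N \<Longrightarrow> tnode E S N"

text \<open>tdesc E S x y: y is a descendant of x in T(G[S]), i.e. the node containing y
  is a proper descendant of the node containing x.\<close>
inductive tdesc :: "('a \<Rightarrow> 'a \<Rightarrow> bool) \<Rightarrow> 'a set \<Rightarrow> 'a \<Rightarrow> 'a \<Rightarrow> bool" for E where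
  disc: "\<not> connected_in S E \<Longrightarrow> component S E C \<Longrightarrow> tdesc E C x y \<Longrightarrow> tdesc E S x y"
| root: "connected_in S E \<Longrightarrow> \<not> clique_in S E \<Longrightarrow> x \<in> universal S E
          \<Longrightarrow> y \<in> S - universal S E \<Longrightarrow> tdesc E S x y"
| sub: "connected_in S E \<Longrightarrow> \<not> clique_in S E \<Longrightarrow> component (S - universal S E) E C
          \<Longrightarrow> tdesc E C x y \<Longrightarrow> tdesc E S x y"

definition basic_member :: "'a set \<Rightarrow> ('a \<Rightarrow> 'a \<Rightarrow> bool) \<Rightarrow> bool" where
  "basic_member S E \<longleftrightarrow> in_C S E \<and> (\<forall>N. tnode E S N \<longrightarrow> card N = 1)"

definition simplicial_in :: "'a set \<Rightarrow> ('a \<Rightarrow> 'a \<Rightarrow> bool) \<Rightarrow> 'a \<Rightarrow> bool" where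
  "simplicial_in S E v \<longleftrightarrow> clique_in {u \<in> S. E v u} E"

definition nbr_in :: "('a \<Rightarrow> 'a \<Rightarrow> bool) \<Rightarrow> 'a set \<Rightarrow> 'a \<Rightarrow> 'a set" where
  "nbr_in E A v = {a \<in> A. E v a}"

definition C_pair :: "'a set \<Rightarrow> ('a \<Rightarrow> 'a \<Rightarrow> bool) \<Rightarrow> bool" where
  "C_pair V E \<longleftrightarrow> graph V E \<and> P_free 6 V E \<and> chordal V E \<and>
     (\<exists>X A. X \<inter> A = {} \<and> V = X \<union> A \<and> clique_in A E \<and> in_C X E \<and>
        (\<forall>x\<in>X. \<exists>a\<in>A. E x a) \<and>
        (\<forall>x\<in>X. \<forall>x'\<in>X. x \<noteq> x' \<and> \<not> E x x' \<longrightarrow> \<not> (\<exists>a\<in>A. E x a \<and> E x' a)))"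

definition basic_C_pair :: "'b set \<Rightarrow> ('b \<Rightarrow> 'b \<Rightarrow> bool) \<Rightarrow> nat \<Rightarrow> (nat \<Rightarrow> 'b) \<Rightarrow> (nat \<Rightarrow> 'b) \<Rightarrow> bool" where
  "basic_C_pair W F k x a \<longleftrightarrow> graph W F \<and>
     inj_on x {1..k} \<and> inj_on a {0..k} \<and> x ` {1..k} \<inter> a ` {0..k} = {} \<and>
     W = x ` {1..k} \<union> a ` {0..k} \<and> clique_in (a ` {0..k}) F \<and>
     basic_member (x ` {1..k}) F \<and>
     (\<forall>i\<in>{1..k}.
        (simplicial_in (x ` {1..k}) F (x i) \<longrightarrow> nbr_in F (a ` {0..k}) (x i) = {a i}) \<and>
        (\<not> simplicial_in (x ` {1..k}) F (x i) \<longrightarrow>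
           nbr_in F (a ` {0..k}) (x i) =
             {a i} \<union> \<Union> {nbr_in F (a ` {0..k}) y | y. tdesc F (x ` {1..k}) (x i) y}))"

definition acceptable :: "('b \<Rightarrow> 'b \<Rightarrow> bool) \<Rightarrow> nat \<Rightarrow> (nat \<Rightarrow> 'b) \<Rightarrow> (nat \<Rightarrow> 'b) \<Rightarrow> 'b set set \<Rightarrow> bool" where
  "acceptable F k x a M \<longleftrightarrow>
     (\<exists>I \<subseteq> {1..k}. clique_in (x ` I) F \<and> M = {{x i, a i} | i. i \<in> I})"

definition graded_pair :: "('a \<Rightarrow> 'a \<Rightarrow> bool) \<Rightarrow> 'a set \<Rightarrow> 'a set \<Rightarrow> bool" where
  "graded_pair E P R \<longleftrightarrow> P \<inter> R = {} \<and> (\<forall>p\<in>P. \<forall>p'\<in>P.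
      {r \<in> R. E p r} \<subseteq> {r \<in> R. E p' r} \<or> {r \<in> R. E p' r} \<subseteq> {r \<in> R. E p r})"

text \<open>(V,E) is an augmentation of (W,F) along M: q maps each vertex of V to the
  vertex w of W whose clique Q_w contains it (Q_w = fibre of q over w, possibly empty).\<close>
definition augmentation :: "'a set \<Rightarrow> ('a \<Rightarrow> 'a \<Rightarrow> bool) \<Rightarrow> 'b set \<Rightarrow> ('b \<Rightarrow> 'b \<Rightarrow> bool) \<Rightarrow> 'b set set \<Rightarrow> bool" where
  "augmentation V E W F M \<longleftrightarrow> (\<exists>q :: 'a \<Rightarrow> 'b.
     (\<forall>v\<in>V. q v \<in> W) \<and>
     (\<forall>w\<in>W. clique_in {v \<in> V. q v = w} E) \<and>
     (\<forall>u\<in>W. \<forall>w\<in>W. u \<noteq> w \<longrightarrow>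
        (F u w \<and> {u, w} \<notin> M \<longrightarrow> (\<forall>p\<in>V. \<forall>p'\<in>V. q p = u \<longrightarrow> q p' = w \<longrightarrow> E p p')) \<and>
        (\<not> F u w \<longrightarrow> (\<forall>p\<in>V. \<forall>p'\<in>V. q p = u \<longrightarrow> q p' = w \<longrightarrow> \<not> E p p')) \<and>
        ({u, w} \<in> M \<longrightarrow> graded_pair E {v \<in> V. q v = u} {v \<in> V. q v = w})))"

end

theory Submission
  imports Defs
begin

text \<open>In a graph without induced \<open>P\<^sub>4\<close> and \<open>C\<^sub>4\<close> the closed neighbourhoods of adjacent
  vertices are nested. Hence a vertex with inclusion-maximal closed neighbourhood is universal,
  \<open>y\<close> is a descendant of \<open>x\<close> in \<open>T(H)\<close> exactly when \<open>N[y] \<subset> N[x]\<close> with \<open>y \<in> N[x]\<close>, and every node of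
  \<open>T(H)\<close> consists of true twins. Contracting the twin classes of \<open>G[X]\<close> therefore gives a basic
  member of \<open>\<C>\<close> on vertices \<open>x\<^sub>1, \<dots>, x\<^sub>k\<close>.

  In a \<open>\<C>\<close>-pair, adjacent vertices of \<open>X\<close> have nested \<open>A\<close>-neighbourhoods (no induced \<open>C\<^sub>4\<close>) and
  non-adjacent ones disjoint \<open>A\<close>-neighbourhoods, so a dominated vertex has the smaller
  \<open>A\<close>-neighbourhood. Put \<open>a \<in> A\<close> into the clique of \<open>a\<^sub>j\<close>, where \<open>x\<^sub>j\<close> is the class of the
  \<open>X\<close>-neighbour of \<open>a\<close> with least neighbourhood (\<open>a\<^sub>0\<close> if there is none). Then the class \<open>x\<^sub>i\<close> is
  complete to \<open>a\<^sub>j\<close> for proper descendants \<open>x\<^sub>j\<close> of \<open>x\<^sub>i\<close> and anticomplete to all other \<open>a\<^sub>j\<close>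
  with \<open>j \<noteq> i\<close>; only the pairs \<open>x\<^sub>i a\<^sub>i\<close> can be merely graded. The indices for which they
  are not complete form a clique, because two non-adjacent ones would give an induced \<open>P\<^sub>6\<close>.\<close>

definition closed_nbhd :: "'a set \<Rightarrow> ('a \<Rightarrow> 'a \<Rightarrow> bool) \<Rightarrow> 'a \<Rightarrow> 'a set" where
  "closed_nbhd S E v = {u \<in> S. u = v \<or> E v u}"

definition dominated :: "'a set \<Rightarrow> ('a \<Rightarrow> 'a \<Rightarrow> bool) \<Rightarrow> 'a \<Rightarrow> 'a \<Rightarrow> bool" where
  "dominated S E y x \<longleftrightarrow> y \<in> closed_nbhd S E x \<and> closed_nbhd S E y \<subset> closed_nbhd S E x"

definition twin_free :: "'a set \<Rightarrow> ('a \<Rightarrow> 'a \<Rightarrow> bool) \<Rightarrow> bool" where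
  "twin_free S E \<longleftrightarrow> inj_on (closed_nbhd S E) S"

lemma closed_nbhd_subset: "closed_nbhd S E v \<subseteq> S"
  unfolding closed_nbhd_def by auto

lemma dominated_trans: "dominated S E z y \<Longrightarrow> dominated S E y x \<Longrightarrow> dominated S E z x"
  unfolding dominated_def by blast

lemma has_induced_mono: "has_induced T E n R \<Longrightarrow> T \<subseteq> S \<Longrightarrow> has_induced S E n R"
  unfolding has_induced_def by (meson order_trans)

lemma P_free_mono: "P_free n S E \<Longrightarrow> T \<subseteq> S \<Longrightarrow> P_free n T E"
  unfolding P_free_def using has_induced_mono by blast

lemma C_free_mono: "C_free n S E \<Longrightarrow> T \<subseteq> S \<Longrightarrow> C_free n T E"
  unfolding C_free_def using has_induced_mono by blast

lemma has_induced_image: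
  assumes "has_induced T E' n R" "inj_on f T" "f ` T \<subseteq> S"
    and "\<And>u v. u \<in> T \<Longrightarrow> v \<in> T \<Longrightarrow> u \<noteq> v \<Longrightarrow> E' u v \<longleftrightarrow> E (f u) (f v)"
  shows "has_induced S E n R"
proof -
  obtain g where g: "inj_on g {..<n}" "g ` {..<n} \<subseteq> T"
    and gR: "\<forall>i<n. \<forall>j<n. i \<noteq> j \<longrightarrow> (E' (g i) (g j) \<longleftrightarrow> R i j)"
    using assms(1) unfolding has_induced_def by blast
  have "inj_on (f \<circ> g) {..<n}"
    using comp_inj_on[OF g(1) inj_on_subset[OF assms(2) g(2)]] .
  moreover have "(f \<circ> g) ` {..<n} \<subseteq> S"
    using g(2) assms(3) by (auto simp: image_subset_iff)
  moreover have "E (f (g i)) (f (g j)) \<longleftrightarrow> R i j" if "i < n" "j < n" "i \<noteq> j" for i j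
  proof -
    have "g i \<noteq> g j" "g i \<in> T" "g j \<in> T"
      using g that by (auto simp: inj_on_def)
    then show ?thesis using assms(4) gR that by blast
  qed
  ultimately show ?thesis
    unfolding has_induced_def by (intro exI[of _ "f \<circ> g"]) auto
qed

lemma in_C_image:
  assumes "in_C S E" "inj_on f T" "f ` T \<subseteq> S"
    and "\<And>u v. u \<in> T \<Longrightarrow> v \<in> T \<Longrightarrow> u \<noteq> v \<Longrightarrow> E' u v \<longleftrightarrow> E (f u) (f v)"
  shows "in_C T E'"
proof -
  have "has_induced S E n R" if "has_induced T E' n R" for n R
    using that assms(2-4) by (rule has_induced_image)
  then show ?thesis
    using assms(1) unfolding in_C_def P_free_def C_free_def twoP3_free_def by blast
qed

lemma has_induced_listI:
  assumes "distinct vs" "set vs \<subseteq> S"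
    and "\<And>i j. i < length vs \<Longrightarrow> j < length vs \<Longrightarrow> i \<noteq> j \<Longrightarrow> E (vs ! i) (vs ! j) \<longleftrightarrow> R i j"
  shows "has_induced S E (length vs) R"
  unfolding has_induced_def
  using assms by (intro exI[of _ "(!) vs"]) (auto simp: inj_on_def nth_eq_iff_index_eq)

section \<open>Graphs without induced \<open>P\<^sub>4\<close> and \<open>C\<^sub>4\<close>\<close>

locale simple_graph =
  fixes E :: "'a \<Rightarrow> 'a \<Rightarrow> bool"
  assumes edge_sym: "E u v \<Longrightarrow> E v u" and edge_irrefl: "\<not> E u u"
begin

lemma edge_commute: "E u v \<longleftrightarrow> E v u"
  using edge_sym by blast

lemma no_induced_P4:
  assumes "P_free 4 S E" "a \<in> S" "b \<in> S" "c \<in> S" "d \<in> S"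
    and "E a b" "E b c" "E c d" "\<not> E a c" "\<not> E b d" "\<not> E a d"
  shows False
proof -
  have sym: "E b a" "E c b" "E d c" "\<not> E c a" "\<not> E d b" "\<not> E d a"
    using assms(6-) edge_sym by blast+
  moreover have "distinct [a, b, c, d]"
    using assms(6-) sym edge_irrefl by auto
  ultimately have "has_induced S E (length [a, b, c, d]) path_rel"
    using assms by (intro has_induced_listI) (auto simp: less_Suc_eq path_rel_def)
  then show False using assms(1) unfolding P_free_def by (simp add: eval_nat_numeral)
qed

lemma no_induced_C4:
  assumes "C_free 4 S E" "a \<in> S" "b \<in> S" "c \<in> S" "d \<in> S"
    and "E a b" "E b c" "E c d" "E d a" "\<not> E a c" "\<not> E b d" "a \<noteq> c" "b \<noteq> d"
  shows False
proof -
  have sym: "E b a" "E c b" "E d c" "E a d" "\<not> E c a" "\<not> E d b"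
    using assms(6-) edge_sym by blast+
  moreover have "distinct [a, b, c, d]"
    using assms(6-) sym edge_irrefl by auto
  ultimately have "has_induced S E (length [a, b, c, d]) (cycle_rel 4)"
    using assms by (intro has_induced_listI) (auto simp: less_Suc_eq cycle_rel_def)
  then show False using assms(1) unfolding C_free_def by (simp add: eval_nat_numeral)
qed

lemma no_induced_P6:
  assumes "P_free 6 S E" "set [a, b, c, d, e, f] \<subseteq> S" "distinct [a, b, c, d, e, f]"
    and "E a b" "E b c" "E c d" "E d e" "E e f"
    and "\<not> E a c" "\<not> E a d" "\<not> E a e" "\<not> E a f" "\<not> E b d" "\<not> E b e" "\<not> E b f"
    and "\<not> E c e" "\<not> E c f" "\<not> E d f"
  shows False
proof -
  have "E b a" "E c b" "E d c" "E e d" "E f e"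
    "\<not> E c a" "\<not> E d a" "\<not> E e a" "\<not> E f a" "\<not> E d b" "\<not> E e b" "\<not> E f b"
    "\<not> E e c" "\<not> E f c" "\<not> E f d"
    using assms(4-) edge_sym by blast+
  then have "has_induced S E (length [a, b, c, d, e, f]) path_rel"
    using assms by (intro has_induced_listI) (auto simp: less_Suc_eq path_rel_def)
  then show False using assms(1) unfolding P_free_def by (simp add: eval_nat_numeral)
qed

abbreviation edge_in :: "'a set \<Rightarrow> 'a \<Rightarrow> 'a \<Rightarrow> bool" where
  "edge_in S \<equiv> \<lambda>a b. a \<in> S \<and> b \<in> S \<and> E a b"

definition component_of :: "'a set \<Rightarrow> 'a \<Rightarrow> 'a set" where
  "component_of S v = {u. (edge_in S)\<^sup>*\<^sup>* v u}"

lemma reach_sym: "(edge_in S)\<^sup>*\<^sup>* v u \<Longrightarrow> (edge_in S)\<^sup>*\<^sup>* u v"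
proof -
  have "symp (edge_in S)" by (auto intro: sympI edge_sym)
  then show "(edge_in S)\<^sup>*\<^sup>* v u \<Longrightarrow> (edge_in S)\<^sup>*\<^sup>* u v"
    by (rule sympD[OF symp_rtranclp])
qed

lemma reach_within_component_of:
  "(edge_in S)\<^sup>*\<^sup>* v u \<Longrightarrow> (edge_in (component_of S v))\<^sup>*\<^sup>* v u"
proof (induction rule: rtranclp_induct)
  case (step b c)
  then have "edge_in (component_of S v) b c"
    unfolding component_of_def by (auto intro: rtranclp.rtrancl_into_rtrancl)
  with step.IH show ?case by (rule rtranclp.rtrancl_into_rtrancl)
qed simp

lemma reach_in_set: "(edge_in S)\<^sup>*\<^sup>* v u \<Longrightarrow> v \<in> S \<Longrightarrow> u \<in> S"
  by (induction rule: rtranclp_induct) auto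

lemma component_of_subset: "v \<in> S \<Longrightarrow> component_of S v \<subseteq> S"
  unfolding component_of_def using reach_in_set by blast

lemma self_in_component_of: "v \<in> component_of S v"
  unfolding component_of_def by simp

lemma nbr_in_component_of: "v \<in> S \<Longrightarrow> u \<in> S \<Longrightarrow> E v u \<Longrightarrow> u \<in> component_of S v"
  unfolding component_of_def by (simp add: r_into_rtranclp)

lemma component_component_of:
  assumes "v \<in> S"
  shows "component S E (component_of S v)"
proof -
  let ?C = "component_of S v"
  have "(edge_in ?C)\<^sup>*\<^sup>* u w" if "u \<in> ?C" "w \<in> ?C" for u w
  proof -
    have "(edge_in ?C)\<^sup>*\<^sup>* v u" "(edge_in ?C)\<^sup>*\<^sup>* v w"
      using that reach_within_component_of unfolding component_of_def by auto
    then show ?thesis using reach_sym by (meson rtranclp_trans)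
  qed
  then have "connected_in ?C E"
    unfolding connected_in_def using self_in_component_of by blast
  moreover have "\<not> E u w" if "u \<in> ?C" "w \<in> S - ?C" for u w
    using that component_of_subset[OF assms]
    unfolding component_of_def by (auto intro: rtranclp.rtrancl_into_rtrancl)
  ultimately show ?thesis
    unfolding component_def using component_of_subset[OF assms] by blast
qed

lemma component_of_psubset:
  assumes "\<not> connected_in S E" "v \<in> S"
  shows "component_of S v \<subset> S"
  using component_component_of[OF assms(2)] component_of_subset[OF assms(2)] assms(1)
  unfolding component_def by auto

lemma reach_leaves_set:
  "(edge_in S)\<^sup>*\<^sup>* v w \<Longrightarrow> v \<in> T \<Longrightarrow> w \<in> T \<or> (\<exists>y\<in>T. \<exists>z\<in>S - T. E y z)"
  by (induction rule: rtranclp_induct) auto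

lemma closed_nbhd_sym: "u \<in> S \<Longrightarrow> w \<in> S \<Longrightarrow> w \<in> closed_nbhd S E u \<longleftrightarrow> u \<in> closed_nbhd S E w"
  unfolding closed_nbhd_def using edge_sym[of u w] edge_sym[of w u] by auto

lemma closed_nbhd_twin:
  assumes "u \<in> S" "w \<in> S" "w' \<in> S" "closed_nbhd S E w = closed_nbhd S E w'"
  shows "w \<in> closed_nbhd S E u \<longleftrightarrow> w' \<in> closed_nbhd S E u"
  using closed_nbhd_sym[OF assms(1,2)] closed_nbhd_sym[OF assms(1,3)] assms(4) by blast

lemma twins_adjacent:
  assumes "u \<in> S" "v \<in> S" "u \<noteq> v" "closed_nbhd S E u = closed_nbhd S E v"
  shows "E u v"
  using assms edge_sym[of v u] unfolding closed_nbhd_def by blast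

lemma edge_twin_cong:
  assumes "u \<in> S" "u' \<in> S" "v \<in> S" "v' \<in> S"
    and "closed_nbhd S E u = closed_nbhd S E u'" "closed_nbhd S E v = closed_nbhd S E v'"
    and "closed_nbhd S E u \<noteq> closed_nbhd S E v"
  shows "E u v \<longleftrightarrow> E u' v'"
proof -
  have "u \<noteq> v" "u' \<noteq> v'" using assms(5-) by auto
  then have "E u v \<longleftrightarrow> v \<in> closed_nbhd S E u" "E u' v' \<longleftrightarrow> v' \<in> closed_nbhd S E u'"
    using assms(1-4) unfolding closed_nbhd_def by auto
  moreover have "v \<in> closed_nbhd S E u \<longleftrightarrow> v' \<in> closed_nbhd S E u"
    using closed_nbhd_twin[OF assms(1,3,4,6)] .
  ultimately show ?thesis using assms(5) by simp
qed

lemma universal_iff_closed_nbhd: "x \<in> S \<Longrightarrow> x \<in> universal S E \<longleftrightarrow> closed_nbhd S E x = S"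
  unfolding universal_def closed_nbhd_def by auto

lemma clique_closed_nbhd: "clique_in S E \<Longrightarrow> x \<in> S \<Longrightarrow> closed_nbhd S E x = S"
  unfolding clique_in_def closed_nbhd_def by auto

lemma closed_nbhd_component:
  "component S E C \<Longrightarrow> v \<in> C \<Longrightarrow> closed_nbhd S E v = closed_nbhd C E v"
  unfolding component_def closed_nbhd_def by blast

lemma closed_nbhd_minus_universal:
  assumes "component (S - universal S E) E C" "v \<in> C"
  shows "closed_nbhd S E v = closed_nbhd C E v \<union> universal S E"
proof -
  have "v \<in> S" "v \<notin> universal S E" using assms unfolding component_def by auto
  then have "universal S E \<subseteq> closed_nbhd S E v"
    unfolding universal_def closed_nbhd_def by (auto simp: edge_commute)
  then show ?thesis
    using assms unfolding component_def closed_nbhd_def by blast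
qed

lemma dominated_imp_edge:
  assumes "dominated S E y x"
  shows "y \<in> S \<and> y \<noteq> x \<and> E x y"
proof -
  have "y \<in> closed_nbhd S E x" "y \<noteq> x" using assms unfolding dominated_def by auto
  then show ?thesis unfolding closed_nbhd_def by auto
qed

lemma dominated_component:
  "component S E C \<Longrightarrow> x \<in> C \<Longrightarrow> y \<in> C \<Longrightarrow> dominated S E y x \<longleftrightarrow> dominated C E y x"
  by (simp add: dominated_def closed_nbhd_component)

lemma dominated_minus_universal:
  assumes "component (S - universal S E) E C" "x \<in> C" "y \<in> C"
  shows "dominated S E y x \<longleftrightarrow> dominated C E y x"
proof -
  let ?U = "universal S E"
  have "C \<inter> ?U = {}" using assms(1) unfolding component_def by blast
  then have disj: "closed_nbhd C E v \<inter> ?U = {}" for v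
    using closed_nbhd_subset[of C E v] by blast
  have "y \<in> closed_nbhd C E x \<union> ?U \<longleftrightarrow> y \<in> closed_nbhd C E x"
    using assms(3) \<open>C \<inter> ?U = {}\<close> by blast
  moreover have "closed_nbhd C E y \<union> ?U \<subset> closed_nbhd C E x \<union> ?U
      \<longleftrightarrow> closed_nbhd C E y \<subset> closed_nbhd C E x"
    using disj[of x] disj[of y] unfolding psubset_eq by blast
  ultimately show ?thesis
    unfolding dominated_def closed_nbhd_minus_universal[OF assms(1,2)]
      closed_nbhd_minus_universal[OF assms(1,3)] by (rule conj_cong)
qed

lemma dominated_not_simplicial:
  assumes "x \<in> S" "dominated S E y x"
  shows "\<not> simplicial_in S E x"
proof -
  have y: "y \<in> S" "y \<noteq> x" "E x y" using dominated_imp_edge[OF assms(2)] by blast+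
  obtain z where z: "z \<in> closed_nbhd S E x" "z \<notin> closed_nbhd S E y"
    using assms(2) psubset_imp_ex_mem unfolding dominated_def by blast
  have "x \<in> closed_nbhd S E y"
    using assms(1) y(3) unfolding closed_nbhd_def by (simp add: edge_commute)
  then have "z \<noteq> x" using z(2) by blast
  then have "z \<in> S" "E x z" using z(1) unfolding closed_nbhd_def by auto
  moreover have "z \<noteq> y" "\<not> E y z" using z(2) \<open>z \<in> S\<close> unfolding closed_nbhd_def by auto
  ultimately have "y \<in> {u \<in> S. E x u}" "z \<in> {u \<in> S. E x u}" "y \<noteq> z" "\<not> E y z"
    using y by auto
  then show ?thesis unfolding simplicial_in_def clique_in_def by blast
qed

lemma graded_pair_sym:
  assumes "graded_pair E P R"
  shows "graded_pair E R P"
  unfolding graded_pair_def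
proof (intro conjI ballI)
  show "R \<inter> P = {}" using assms unfolding graded_pair_def by blast
  fix r r' assume "r \<in> R" "r' \<in> R"
  show "{p \<in> P. E r p} \<subseteq> {p \<in> P. E r' p} \<or> {p \<in> P. E r' p} \<subseteq> {p \<in> P. E r p}"
  proof (rule ccontr)
    assume "\<not> ?thesis"
    then obtain p p' where "p \<in> P" "p' \<in> P" "E p r" "\<not> E p r'" "E p' r'" "\<not> E p' r"
      by (auto simp: edge_commute)
    moreover have "{x \<in> R. E p x} \<subseteq> {x \<in> R. E p' x} \<or> {x \<in> R. E p' x} \<subseteq> {x \<in> R. E p x}"
      using assms calculation(1,2) unfolding graded_pair_def by blast
    ultimately show False using \<open>r \<in> R\<close> \<open>r' \<in> R\<close> by blast
  qed
qed

lemma closed_nbhds_nested: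
  assumes "P_free 4 S E" "C_free 4 S E" "x \<in> S" "y \<in> S" "E x y"
  shows "closed_nbhd S E x \<subseteq> closed_nbhd S E y \<or> closed_nbhd S E y \<subseteq> closed_nbhd S E x"
proof (rule ccontr)
  assume "\<not> ?thesis"
  then obtain x' y' where x': "x' \<in> closed_nbhd S E x" "x' \<notin> closed_nbhd S E y"
    and y': "y' \<in> closed_nbhd S E y" "y' \<notin> closed_nbhd S E x"
    by blast
  have "x \<in> closed_nbhd S E y" "y \<in> closed_nbhd S E x"
    using assms(3-5) unfolding closed_nbhd_def by (auto simp: edge_commute)
  then have "x' \<noteq> x" "y' \<noteq> y" using x'(2) y'(2) by blast+
  then have x'': "x' \<in> S" "E x' x" "\<not> E x' y" "x' \<noteq> y"
    and y'': "y' \<in> S" "E y y'" "\<not> E x y'" "x \<noteq> y'"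
    using x' y' unfolding closed_nbhd_def by (auto simp: edge_commute)
  show False
  proof (cases "E y' x'")
    case True
    show False
      by (rule no_induced_C4[OF assms(2) x''(1) assms(3,4) y''(1) x''(2) assms(5) y''(2) True
            x''(3) y''(3) x''(4) y''(4)])
  next
    case False
    then have "\<not> E x' y'" by (simp add: edge_commute)
    then show False
      by (rule no_induced_P4[OF assms(1) x''(1) assms(3,4) y''(1) x''(2) assms(5) y''(2)
            x''(3) y''(3)])
  qed
qed

text \<open>A vertex with inclusion-maximal closed neighbourhood is universal: a path leaving its
  neighbourhood would produce a neighbour with a strictly larger one.\<close>

lemma universal_nonempty:
  assumes "finite S" "connected_in S E" "P_free 4 S E" "C_free 4 S E"
  shows "universal S E \<noteq> {}"
proof -
  have ne: "closed_nbhd S E ` S \<noteq> {}" using assms(2) unfolding connected_in_def by blast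
  obtain m where m: "m \<in> closed_nbhd S E ` S"
    and m_maximal: "\<forall>b \<in> closed_nbhd S E ` S. m \<subseteq> b \<longrightarrow> m = b"
    using finite_has_maximal[OF finite_imageI[OF assms(1)] ne] by (elim bexE) simp
  then obtain v where v: "v \<in> S" "m = closed_nbhd S E v" by blast
  have maximal: "closed_nbhd S E v = closed_nbhd S E u"
    if "u \<in> S" "closed_nbhd S E v \<subseteq> closed_nbhd S E u" for u
    using m_maximal that v(2) by blast
  have "closed_nbhd S E v = S"
  proof (rule ccontr)
    assume "closed_nbhd S E v \<noteq> S"
    then obtain w where "w \<in> S" "w \<notin> closed_nbhd S E v"
      using closed_nbhd_subset[of S E v] by blast
    moreover have "(edge_in S)\<^sup>*\<^sup>* v w"
      using assms(2) v(1) \<open>w \<in> S\<close> unfolding connected_in_def by blast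
    moreover have "v \<in> closed_nbhd S E v" using v(1) unfolding closed_nbhd_def by simp
    ultimately obtain y z where y: "y \<in> closed_nbhd S E v"
      and z: "z \<in> S" "z \<notin> closed_nbhd S E v" "E y z"
      using reach_leaves_set[of S v w "closed_nbhd S E v"] by blast
    have "y \<noteq> v" using y z unfolding closed_nbhd_def by auto
    then have "y \<in> S" "E v y" using y unfolding closed_nbhd_def by auto
    have "z \<in> closed_nbhd S E y" using z unfolding closed_nbhd_def by simp
    then have "\<not> closed_nbhd S E y \<subseteq> closed_nbhd S E v" using z(2) by blast
    then have "closed_nbhd S E v \<subseteq> closed_nbhd S E y"
      using closed_nbhds_nested[OF assms(3,4) v(1) \<open>y \<in> S\<close> \<open>E v y\<close>] by blast
    then show False
      using maximal[OF \<open>y \<in> S\<close>] \<open>\<not> closed_nbhd S E y \<subseteq> closed_nbhd S E v\<close> by blast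
  qed
  then show ?thesis using universal_iff_closed_nbhd[OF v(1)] by blast
qed

lemma tdesc_imp_dominated: "tdesc E S x y \<Longrightarrow> x \<in> S \<and> dominated S E y x"
proof (induction rule: tdesc.induct)
  case (disc S C x y)
  then have "y \<in> C" "C \<subseteq> S" using dominated_imp_edge unfolding component_def by blast+
  then show ?case using disc dominated_component[OF disc(2)] by blast
next
  case (root S x y)
  then have "closed_nbhd S E x = S" "closed_nbhd S E y \<noteq> S" "x \<in> S"
    using universal_iff_closed_nbhd unfolding universal_def by auto
  then show ?case
    using root(4) closed_nbhd_subset[of S E y] unfolding dominated_def by blast
next
  case (sub S C x y)
  then have "y \<in> C" "C \<subseteq> S" using dominated_imp_edge unfolding component_def by blast+
  then show ?case using sub dominated_minus_universal[OF sub(3)] by blast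
qed

lemma dominated_imp_tdesc:
  assumes "finite S" "P_free 4 S E" "C_free 4 S E" "x \<in> S" "dominated S E y x"
  shows "tdesc E S x y"
  using assms
proof (induction "card S" arbitrary: S rule: less_induct)
  case less
  have y: "y \<in> S" "y \<noteq> x" "E x y" using dominated_imp_edge[OF less.prems(5)] by blast+
  have IH: "tdesc E C x y"
    if "C \<subset> S" "x \<in> C" "y \<in> C" "dominated C E y x" for C
  proof -
    have "C \<subseteq> S" using that(1) by blast
    show ?thesis
      by (rule less.hyps[OF psubset_card_mono[OF less.prems(1) that(1)]
            finite_subset[OF \<open>C \<subseteq> S\<close> less.prems(1)] P_free_mono[OF less.prems(2) \<open>C \<subseteq> S\<close>]
            C_free_mono[OF less.prems(3) \<open>C \<subseteq> S\<close>] that(2,4)])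
  qed
  show ?case
  proof (cases "connected_in S E")
    case False
    let ?C = "component_of S x"
    have C: "component S E ?C" "?C \<subset> S" "x \<in> ?C" "y \<in> ?C"
      using component_component_of component_of_psubset[OF False] self_in_component_of
        nbr_in_component_of less.prems(4) y by auto
    then have "dominated ?C E y x" using dominated_component less.prems(5) by blast
    then show ?thesis using tdesc.disc[OF False C(1)] IH C(2-4) by blast
  next
    case connected: True
    let ?U = "universal S E"
    have ncl: "\<not> clique_in S E"
      using less.prems(5) clique_closed_nbhd[OF _ less.prems(4)] clique_closed_nbhd[OF _ y(1)]
      unfolding dominated_def by auto
    have "y \<notin> ?U"
      using less.prems(5) closed_nbhd_subset[of S E x] universal_iff_closed_nbhd[OF y(1)]
      unfolding dominated_def by auto
    show ?thesis
    proof (cases "x \<in> ?U")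
      case True
      then show ?thesis using tdesc.root[OF connected ncl True] y(1) \<open>y \<notin> ?U\<close> by blast
    next
      case False
      let ?C = "component_of (S - ?U) x"
      have "x \<in> S - ?U" "y \<in> S - ?U" using False less.prems(4) y(1) \<open>y \<notin> ?U\<close> by auto
      then have C: "component (S - ?U) E ?C" "?C \<subseteq> S - ?U" "x \<in> ?C" "y \<in> ?C"
        using component_component_of component_of_subset self_in_component_of
          nbr_in_component_of y(3) by auto
      moreover have "?U \<noteq> {}" "?U \<subseteq> S"
        using universal_nonempty[OF less.prems(1) connected less.prems(2,3)]
        unfolding universal_def by auto
      ultimately have "?C \<subset> S" by blast
      moreover have "dominated ?C E y x"
        using dominated_minus_universal[OF C(1,3,4)] less.prems(5) by blast
      ultimately show ?thesis using tdesc.sub[OF connected ncl C(1)] IH C(3,4) by blast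
    qed
  qed
qed

lemma tdesc_iff_dominated:
  assumes "finite S" "P_free 4 S E" "C_free 4 S E"
  shows "tdesc E S x y \<longleftrightarrow> x \<in> S \<and> dominated S E y x"
  using tdesc_imp_dominated dominated_imp_tdesc[OF assms] by blast

lemma tnode_twins:
  assumes "tnode E S N" "finite S" "P_free 4 S E" "C_free 4 S E"
  shows "\<exists>c. N \<noteq> {} \<and> N \<subseteq> S \<and> (\<forall>u\<in>N. closed_nbhd S E u = c)"
  using assms
proof (induction rule: tnode.induct)
  case (disc S C N)
  have "C \<subseteq> S" using disc.hyps(2) unfolding component_def by blast
  then obtain c where c: "N \<noteq> {}" "N \<subseteq> C" "\<forall>u\<in>N. closed_nbhd C E u = c"
    using disc.IH finite_subset[OF \<open>C \<subseteq> S\<close> disc.prems(1)]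
      P_free_mono[OF disc.prems(2) \<open>C \<subseteq> S\<close>] C_free_mono[OF disc.prems(3) \<open>C \<subseteq> S\<close>]
    by blast
  have "closed_nbhd S E u = c" if "u \<in> N" for u
    using closed_nbhd_component[OF disc.hyps(2), of u] c that by auto
  then show ?case using c(1,2) \<open>C \<subseteq> S\<close> by (intro exI[of _ c]) blast
next
  case (clq S)
  have "S \<noteq> {}" using clq.hyps(1) unfolding connected_in_def by blast
  then show ?case using clique_closed_nbhd[OF clq.hyps(2)] by blast
next
  case (root S)
  have "universal S E \<noteq> {}" using universal_nonempty root.hyps(1) root.prems by blast
  moreover have "universal S E \<subseteq> S" unfolding universal_def by blast
  moreover have "closed_nbhd S E u = S" if "u \<in> universal S E" for u
    using that universal_iff_closed_nbhd \<open>universal S E \<subseteq> S\<close> by blast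
  ultimately show ?case by blast
next
  case (sub S C N)
  have "C \<subseteq> S" using sub.hyps(3) unfolding component_def by blast
  then obtain c where c: "N \<noteq> {}" "N \<subseteq> C" "\<forall>u\<in>N. closed_nbhd C E u = c"
    using sub.IH finite_subset[OF \<open>C \<subseteq> S\<close> sub.prems(1)]
      P_free_mono[OF sub.prems(2) \<open>C \<subseteq> S\<close>] C_free_mono[OF sub.prems(3) \<open>C \<subseteq> S\<close>]
    by blast
  have "closed_nbhd S E u = c \<union> universal S E" if "u \<in> N" for u
    using closed_nbhd_minus_universal[OF sub.hyps(3), of u] c that by auto
  then show ?case using c(1,2) \<open>C \<subseteq> S\<close> by (intro exI[of _ "c \<union> universal S E"]) blast
qed

lemma twin_free_basic_member:
  assumes "in_C S E" "finite S" "twin_free S E"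
  shows "basic_member S E"
  unfolding basic_member_def
proof (intro conjI allI impI)
  fix N assume "tnode E S N"
  have "P_free 4 S E" "C_free 4 S E" using assms(1) unfolding in_C_def by simp_all
  then obtain c where N: "N \<noteq> {}" "N \<subseteq> S" "\<And>u. u \<in> N \<Longrightarrow> closed_nbhd S E u = c"
    using tnode_twins[OF \<open>tnode E S N\<close> assms(2)] by blast
  have "u = v" if "u \<in> N" "v \<in> N" for u v
  proof (rule inj_onD[OF assms(3)[unfolded twin_free_def]])
    show "closed_nbhd S E u = closed_nbhd S E v" using N(3) that by simp
    show "u \<in> S" "v \<in> S" using N(2) that by auto
  qed
  then have "is_singleton N" by (rule is_singletonI'[OF N(1)])
  then show "card N = 1" by (simp add: is_singleton_altdef)
qed (rule assms(1))

end

section \<open>The standard basic pair on a twin-free graph\<close>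

text \<open>The standard basic pair on a graph \<open>H\<close> with vertices \<open>1..k\<close>: vertex \<open>i \<le> k\<close> plays \<open>x\<^sub>i\<close> and
  vertex \<open>k + 1 + j\<close> plays \<open>a\<^sub>j\<close> for \<open>0 \<le> j \<le> k\<close>.\<close>

definition std_attached :: "nat \<Rightarrow> (nat \<Rightarrow> nat \<Rightarrow> bool) \<Rightarrow> nat \<Rightarrow> nat \<Rightarrow> bool" where
  "std_attached k H i j \<longleftrightarrow> 1 \<le> j \<and> (j = i \<or> dominated {1..k} H j i)"

definition std_edge :: "nat \<Rightarrow> (nat \<Rightarrow> nat \<Rightarrow> bool) \<Rightarrow> nat \<Rightarrow> nat \<Rightarrow> bool" where
  "std_edge k H u v \<longleftrightarrow> u \<noteq> v \<and> u \<in> {1..2*k+1} \<and> v \<in> {1..2*k+1} \<and>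
     (u \<le> k \<and> v \<le> k \<and> H u v \<or> k < u \<and> k < v \<or>
      u \<le> k \<and> k < v \<and> std_attached k H u (v - (k + 1)) \<or>
      v \<le> k \<and> k < u \<and> std_attached k H v (u - (k + 1)))"

lemma std_edge_simple_graph:
  assumes "symp H"
  shows "simple_graph (std_edge k H)"
proof
  show "std_edge k H v u" if "std_edge k H u v" for u v
    using that sympD[OF assms, of u v] unfolding std_edge_def by auto
qed (simp add: std_edge_def)

lemma std_edge_X_X:
  "i \<in> {1..k} \<Longrightarrow> j \<in> {1..k} \<Longrightarrow> std_edge k H i j \<longleftrightarrow> i \<noteq> j \<and> H i j"
  unfolding std_edge_def by auto

lemma std_edge_X_A:
  "i \<in> {1..k} \<Longrightarrow> j \<le> k \<Longrightarrow> std_edge k H i (k + 1 + j) \<longleftrightarrow> std_attached k H i j"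
  unfolding std_edge_def std_attached_def by auto

lemma std_edge_A_A:
  "i \<le> k \<Longrightarrow> j \<le> k \<Longrightarrow> i \<noteq> j \<Longrightarrow> std_edge k H (k + 1 + i) (k + 1 + j)"
  unfolding std_edge_def by auto

lemma closed_nbhd_std_edge:
  "i \<in> {1..k} \<Longrightarrow> closed_nbhd {1..k} (std_edge k H) i = closed_nbhd {1..k} H i"
  unfolding closed_nbhd_def by (auto simp: std_edge_X_X)

lemma dominated_std_edge:
  assumes "i \<in> {1..k}"
  shows "dominated {1..k} (std_edge k H) j i \<longleftrightarrow> dominated {1..k} H j i"
proof (cases "j \<in> {1..k}")
  case True
  then show ?thesis
    unfolding dominated_def closed_nbhd_std_edge[OF assms] closed_nbhd_std_edge[OF True] by simp
next
  case False
  have "\<not> dominated {1..k} G j i" for G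
    using False closed_nbhd_subset[of "{1..k}" G i] unfolding dominated_def by blast
  then show ?thesis by simp
qed

lemma nbr_in_std_edge:
  assumes "i \<in> {1..k}"
  shows "nbr_in (std_edge k H) ((\<lambda>j. k + 1 + j) ` {0..k}) i
       = (\<lambda>j. k + 1 + j) ` {j \<in> {1..k}. j = i \<or> dominated {1..k} H j i}"
  using assms std_edge_X_A[OF assms] unfolding nbr_in_def std_attached_def by auto

lemma in_C_std_edge: "in_C {1..k} H \<Longrightarrow> in_C {1..k} (std_edge k H)"
  by (erule in_C_image[of _ _ "\<lambda>i. i"]) (auto simp: std_edge_X_X)

lemma tdesc_std_edge:
  assumes "symp H" "in_C {1..k} H" "i \<in> {1..k}"
  shows "tdesc (std_edge k H) {1..k} i y \<longleftrightarrow> dominated {1..k} H y i"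
proof -
  interpret F: simple_graph "std_edge k H" by (rule std_edge_simple_graph[OF assms(1)])
  have P4: "P_free 4 {1..k} (std_edge k H)" and C4: "C_free 4 {1..k} (std_edge k H)"
    using in_C_std_edge[OF assms(2)] unfolding in_C_def by simp_all
  show ?thesis
    unfolding F.tdesc_iff_dominated[OF finite_atLeastAtMost P4 C4] dominated_std_edge[OF assms(3)]
    using assms(3) by simp
qed

lemma nbr_in_std_edge_tdesc:
  assumes "symp H" "in_C {1..k} H" "i \<in> {1..k}"
  shows "nbr_in (std_edge k H) ((\<lambda>j. k + 1 + j) ` {0..k}) i =
    {k + 1 + i} \<union> \<Union> {nbr_in (std_edge k H) ((\<lambda>j. k + 1 + j) ` {0..k}) y | y.
      tdesc (std_edge k H) {1..k} i y}"
    (is "?N i = _ \<union> \<Union> {?N y | y. ?T y}")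
proof (intro equalityI subsetI)
  fix b assume "b \<in> ?N i"
  then obtain j where j: "j \<in> {1..k}" "j = i \<or> dominated {1..k} H j i" "b = k + 1 + j"
    using nbr_in_std_edge[OF assms(3)] by auto
  show "b \<in> {k + 1 + i} \<union> \<Union> {?N y | y. ?T y}"
  proof (cases "j = i")
    case False
    then have "?T j" "b \<in> ?N j"
      using j tdesc_std_edge[OF assms] nbr_in_std_edge[OF j(1)] by auto
    then show ?thesis by blast
  qed (use j in simp)
next
  fix b assume "b \<in> {k + 1 + i} \<union> \<Union> {?N y | y. ?T y}"
  then consider "b = k + 1 + i" | y where "?T y" "b \<in> ?N y" by blast
  then show "b \<in> ?N i"
  proof cases
    case 1
    then show ?thesis using nbr_in_std_edge[OF assms(3)] assms(3) by auto
  next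
    case (2 y)
    have y: "dominated {1..k} H y i" "y \<in> {1..k}"
      using 2(1) tdesc_std_edge[OF assms] closed_nbhd_subset[of "{1..k}" H i]
      unfolding dominated_def by auto
    then obtain j where j: "j \<in> {1..k}" "j = y \<or> dominated {1..k} H j y" "b = k + 1 + j"
      using 2(2) nbr_in_std_edge[OF y(2)] by auto
    have "dominated {1..k} H j i" using j(2) y(1) dominated_trans[of "{1..k}" H j y i] by blast
    then show ?thesis using nbr_in_std_edge[OF assms(3)] j(1,3) by blast
  qed
qed

lemma basic_C_pair_std_edge:
  assumes "symp H" "in_C {1..k} H" "twin_free {1..k} H"
  shows "basic_C_pair {1..2*k+1} (std_edge k H) k (\<lambda>i. i) (\<lambda>j. k + 1 + j)"
proof -
  let ?F = "std_edge k H" and ?X = "{1..k}" and ?a = "\<lambda>j. k + 1 + j"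
  let ?A = "?a ` {0..k}"
  interpret F: simple_graph ?F by (rule std_edge_simple_graph[OF assms(1)])
  have "inj_on (closed_nbhd ?X ?F) ?X = inj_on (closed_nbhd ?X H) ?X"
    by (rule inj_on_cong) (rule closed_nbhd_std_edge)
  then have basic: "basic_member ?X ?F"
    using F.twin_free_basic_member[OF in_C_std_edge[OF assms(2)] finite_atLeastAtMost] assms(3)
    unfolding twin_free_def by simp
  note nbr = nbr_in_std_edge_tdesc[OF assms(1,2)]
  have simplicial: "nbr_in ?F ?A i = {?a i}" if "i \<in> ?X" "simplicial_in ?X ?F i" for i
  proof -
    have "\<not> tdesc ?F ?X i y" for y
      using that F.dominated_not_simplicial[OF that(1)] F.tdesc_imp_dominated by blast
    then show ?thesis using nbr[OF that(1)] by simp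
  qed
  show ?thesis
    unfolding basic_C_pair_def image_ident
  proof (intro conjI ballI impI)
    show "graph {1..2*k+1} ?F"
      unfolding graph_def using F.edge_sym by (auto simp: std_edge_def)
    show "clique_in ?A ?F"
      unfolding clique_in_def using std_edge_A_A by auto
    show "inj_on ?a {0..k}" by (simp add: inj_on_def)
    have "?A = {k + 1..2 * k + 1}"
      using image_add_atLeastAtMost[of "k + 1" 0 k] by simp
    then show "?X \<inter> ?A = {}" "{1..2*k+1} = ?X \<union> ?A" by auto
  qed (use basic nbr simplicial in auto)
qed

section \<open>Decomposing a \<open>\<C>\<close>-pair\<close>

locale C_pair_split = simple_graph E for E :: "'a \<Rightarrow> 'a \<Rightarrow> bool" +
  fixes V X A :: "'a set"
  assumes finite_V: "finite V"
    and P6_free: "P_free 6 V E" and C4_free: "C_free 4 V E"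
    and disjoint: "X \<inter> A = {}" and V_eq: "V = X \<union> A"
    and clique_A: "clique_in A E" and in_C_X: "in_C X E"
    and A_nbr_exists: "x \<in> X \<Longrightarrow> \<exists>a\<in>A. E x a"
    and A_nbr_private: "x \<in> X \<Longrightarrow> x' \<in> X \<Longrightarrow> x \<noteq> x' \<Longrightarrow> \<not> E x x' \<Longrightarrow> a \<in> A \<Longrightarrow> E x a
      \<Longrightarrow> \<not> E x' a"
begin

abbreviation NX :: "'a \<Rightarrow> 'a set" where
  "NX \<equiv> closed_nbhd X E"

definition NA :: "'a \<Rightarrow> 'a set" where
  "NA v = {a \<in> A. E v a}"

lemma finite_X: "finite X"
  using finite_V V_eq by simp

lemma A_adjacent: "a \<in> A \<Longrightarrow> b \<in> A \<Longrightarrow> a \<noteq> b \<Longrightarrow> E a b"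
  using clique_A unfolding clique_in_def by blast

lemma X_nbhds_nested:
  "x \<in> X \<Longrightarrow> y \<in> X \<Longrightarrow> E x y \<Longrightarrow> NX x \<subseteq> NX y \<or> NX y \<subseteq> NX x"
  using closed_nbhds_nested in_C_X unfolding in_C_def by blast

lemma A_nbhds_nested:
  assumes "x \<in> X" "y \<in> X" "E x y"
  shows "NA x \<subseteq> NA y \<or> NA y \<subseteq> NA x"
proof (rule ccontr)
  assume "\<not> ?thesis"
  then obtain a b where a: "a \<in> A" "E x a" "\<not> E y a" and b: "b \<in> A" "E y b" "\<not> E x b"
    unfolding NA_def by blast
  have "a \<noteq> b" using a b by blast
  then have "E a b" using A_adjacent a(1) b(1) by blast
  moreover have "x \<noteq> b" "a \<noteq> y" using assms(1,2) a(1) b(1) disjoint by blast+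
  moreover have "E b y" "E y x" "\<not> E a y" using assms(3) a(3) b(2) by (simp_all add: edge_commute)
  moreover have "x \<in> V" "a \<in> V" "b \<in> V" "y \<in> V" using assms(1,2) a(1) b(1) V_eq by auto
  ultimately show False
    using no_induced_C4[OF C4_free _ _ _ _ a(2)] b(3) by blast
qed

lemma dominated_A_nbhd:
  assumes "x \<in> X" "y \<in> X" "dominated X E y x"
  shows "NA y \<subseteq> NA x"
proof (rule ccontr)
  assume "\<not> NA y \<subseteq> NA x"
  have "E x y" using dominated_imp_edge[OF assms(3)] by blast
  obtain z where z: "z \<in> NX x" "z \<notin> NX y"
    using assms(3) psubset_imp_ex_mem unfolding dominated_def by blast
  have "x \<in> NX y" using assms(1) \<open>E x y\<close> unfolding closed_nbhd_def by (simp add: edge_commute)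
  then have "z \<noteq> x" using z(2) by blast
  then have "z \<in> X" "E x z" "z \<noteq> y" "\<not> E y z" using z unfolding closed_nbhd_def by auto
  then have "NA y \<inter> NA z = {}" using A_nbr_private[OF assms(2)] unfolding NA_def by blast
  moreover have "NA x \<noteq> {}" "NA z \<noteq> {}"
    using A_nbr_exists assms(1) \<open>z \<in> X\<close> unfolding NA_def by blast+
  moreover have "NA x \<subseteq> NA y"
    using A_nbhds_nested[OF assms(1,2) \<open>E x y\<close>] \<open>\<not> NA y \<subseteq> NA x\<close> by blast
  moreover have "NA x \<subseteq> NA z \<or> NA z \<subseteq> NA x"
    using A_nbhds_nested[OF assms(1) \<open>z \<in> X\<close> \<open>E x z\<close>] .
  ultimately show False by blast
qed

definition n_classes :: nat where
  "n_classes = card (NX ` X)"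

definition class_nbhd :: "nat \<Rightarrow> 'a set" where
  "class_nbhd = (SOME h. bij_betw h {1..n_classes} (NX ` X))"

definition cls :: "'a \<Rightarrow> nat" where
  "cls v = inv_into {1..n_classes} class_nbhd (NX v)"

definition class_rep :: "nat \<Rightarrow> 'a" where
  "class_rep i = (SOME v. v \<in> X \<and> NX v = class_nbhd i)"

lemma class_nbhd_bij: "bij_betw class_nbhd {1..n_classes} (NX ` X)"
proof -
  have "\<exists>h. bij_betw h {1..n_classes} (NX ` X)"
    unfolding n_classes_def by (rule ex_bij_betw_nat_finite_1[OF finite_imageI[OF finite_X]])
  then show ?thesis unfolding class_nbhd_def by (rule someI_ex)
qed

lemma cls_in: "v \<in> X \<Longrightarrow> cls v \<in> {1..n_classes}"
  unfolding cls_def using class_nbhd_bij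
  by (intro inv_into_into) (simp add: bij_betw_def)

lemma class_nbhd_cls: "v \<in> X \<Longrightarrow> class_nbhd (cls v) = NX v"
  unfolding cls_def using class_nbhd_bij by (simp add: bij_betw_def f_inv_into_f)

lemma cls_eq_iff: "u \<in> X \<Longrightarrow> v \<in> X \<Longrightarrow> cls u = cls v \<longleftrightarrow> NX u = NX v"
  using class_nbhd_cls unfolding cls_def by metis

lemma class_rep:
  assumes "i \<in> {1..n_classes}"
  shows "class_rep i \<in> X" "NX (class_rep i) = class_nbhd i"
proof -
  have "class_nbhd i \<in> NX ` X" using class_nbhd_bij assms unfolding bij_betw_def by blast
  then have "\<exists>v. v \<in> X \<and> NX v = class_nbhd i" by blast
  then have "class_rep i \<in> X \<and> NX (class_rep i) = class_nbhd i"
    unfolding class_rep_def by (rule someI_ex)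
  then show "class_rep i \<in> X" "NX (class_rep i) = class_nbhd i" by simp_all
qed

lemma cls_class_rep: "i \<in> {1..n_classes} \<Longrightarrow> cls (class_rep i) = i"
  unfolding cls_def class_rep(2)
  using class_nbhd_bij by (simp add: bij_betw_def inv_into_f_f)

definition quot_edge :: "nat \<Rightarrow> nat \<Rightarrow> bool" where
  "quot_edge i j \<longleftrightarrow> i \<in> {1..n_classes} \<and> j \<in> {1..n_classes} \<and> i \<noteq> j \<and>
     E (class_rep i) (class_rep j)"

lemma symp_quot_edge: "symp quot_edge"
  unfolding quot_edge_def by (auto intro: sympI simp: edge_commute)

lemma quot_edge_cls:
  assumes "u \<in> X" "v \<in> X" "cls u \<noteq> cls v"
  shows "quot_edge (cls u) (cls v) \<longleftrightarrow> E u v"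
proof -
  have reps: "class_rep (cls u) \<in> X" "class_rep (cls v) \<in> X"
    "NX (class_rep (cls u)) = NX u" "NX (class_rep (cls v)) = NX v"
    using class_rep cls_in class_nbhd_cls assms(1,2) by auto
  have "NX u \<noteq> NX v" using assms cls_eq_iff by blast
  then have "E (class_rep (cls u)) (class_rep (cls v)) \<longleftrightarrow> E u v"
    using edge_twin_cong[OF reps(1) assms(1) reps(2) assms(2) reps(3,4)] reps(3,4) by simp
  then show ?thesis unfolding quot_edge_def using cls_in assms by auto
qed

lemma in_C_quot: "in_C {1..n_classes} quot_edge"
proof (rule in_C_image[OF in_C_X])
  show "inj_on class_rep {1..n_classes}"
    using cls_class_rep by (metis inj_onI)
  show "class_rep ` {1..n_classes} \<subseteq> X" using class_rep(1) by blast
qed (simp add: quot_edge_def)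

lemma closed_nbhd_quot:
  assumes "x \<in> X"
  shows "closed_nbhd {1..n_classes} quot_edge (cls x) = cls ` NX x"
proof (intro equalityI subsetI)
  fix j assume j: "j \<in> closed_nbhd {1..n_classes} quot_edge (cls x)"
  then have "j \<in> {1..n_classes}" unfolding closed_nbhd_def by blast
  let ?v = "class_rep j"
  have v: "?v \<in> X" "cls ?v = j" using class_rep(1) cls_class_rep \<open>j \<in> {1..n_classes}\<close> by auto
  have "?v \<in> NX x"
  proof (cases "j = cls x")
    case True
    then have "NX ?v = NX x" using cls_eq_iff v assms by blast
    then show ?thesis using v(1) unfolding closed_nbhd_def by blast
  next
    case False
    then have "quot_edge (cls x) j" using j unfolding closed_nbhd_def by auto
    then have "E x ?v" using quot_edge_cls[OF assms v(1)] False v(2) by simp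
    then show ?thesis using v(1) unfolding closed_nbhd_def by simp
  qed
  then show "j \<in> cls ` NX x" using v(2) by (rule rev_image_eqI[OF _ sym])
next
  fix j assume "j \<in> cls ` NX x"
  then obtain v where v: "v \<in> X" "v = x \<or> E x v" "j = cls v"
    unfolding closed_nbhd_def by blast
  show "j \<in> closed_nbhd {1..n_classes} quot_edge (cls x)"
  proof (cases "cls x = cls v")
    case True
    then show ?thesis using cls_in[OF assms] v(3) unfolding closed_nbhd_def by simp
  next
    case False
    then have "E x v" using v(2) by blast
    then have "quot_edge (cls x) (cls v)" using quot_edge_cls[OF assms v(1) False] by simp
    then show ?thesis using cls_in[OF v(1)] v(3) unfolding closed_nbhd_def by simp
  qed
qed

lemma cls_in_image_iff:
  assumes "x \<in> X" "y \<in> X"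
  shows "cls y \<in> cls ` NX x \<longleftrightarrow> y \<in> NX x"
proof
  assume "cls y \<in> cls ` NX x"
  then obtain y' where "y' \<in> NX x" "cls y' = cls y" by auto
  moreover have "y' \<in> X" using \<open>y' \<in> NX x\<close> closed_nbhd_subset[of X E x] by blast
  ultimately have "NX y' = NX y" using cls_eq_iff[OF _ assms(2)] by blast
  then show "y \<in> NX x"
    using closed_nbhd_twin[OF assms(1) \<open>y' \<in> X\<close> assms(2)] \<open>y' \<in> NX x\<close> by blast
qed simp

lemma cls_image_subset_iff:
  assumes "x \<in> X" "y \<in> X"
  shows "cls ` NX y \<subseteq> cls ` NX x \<longleftrightarrow> NX y \<subseteq> NX x"
proof
  assume sub: "cls ` NX y \<subseteq> cls ` NX x"
  show "NX y \<subseteq> NX x"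
  proof
    fix v assume "v \<in> NX y"
    then have "v \<in> X" "cls v \<in> cls ` NX x"
      using closed_nbhd_subset[of X E y] sub by auto
    then show "v \<in> NX x" using cls_in_image_iff[OF assms(1)] by blast
  qed
qed (rule image_mono)

lemma dominated_quot:
  assumes "x \<in> X" "y \<in> X"
  shows "dominated {1..n_classes} quot_edge (cls y) (cls x) \<longleftrightarrow> dominated X E y x"
  unfolding dominated_def closed_nbhd_quot[OF assms(1)] closed_nbhd_quot[OF assms(2)]
    psubset_eq set_eq_subset
  using assms by (simp add: cls_in_image_iff cls_image_subset_iff)

lemma twin_free_quot: "twin_free {1..n_classes} quot_edge"
  unfolding twin_free_def
proof (rule inj_onI)
  fix i j assume ij: "i \<in> {1..n_classes}" "j \<in> {1..n_classes}"
    and eq: "closed_nbhd {1..n_classes} quot_edge i = closed_nbhd {1..n_classes} quot_edge j"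
  have reps: "class_rep i \<in> X" "class_rep j \<in> X" "cls (class_rep i) = i" "cls (class_rep j) = j"
    using class_rep(1) cls_class_rep ij by auto
  then have "cls ` NX (class_rep i) = cls ` NX (class_rep j)"
    using eq closed_nbhd_quot[OF reps(1)] closed_nbhd_quot[OF reps(2)] reps(3,4) by simp
  then have "NX (class_rep i) = NX (class_rep j)"
    using cls_image_subset_iff[OF reps(1,2)] cls_image_subset_iff[OF reps(2,1)] by blast
  then show "i = j" using cls_eq_iff[OF reps(1,2)] reps(3,4) by simp
qed

definition X_nbrs :: "'a \<Rightarrow> 'a set" where
  "X_nbrs b = {p \<in> X. E p b}"

definition min_X_nbr :: "'a \<Rightarrow> 'a" where
  "min_X_nbr b = arg_min_on (\<lambda>p. card (NX p)) (X_nbrs b)"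

text \<open>The \<open>X\<close>-neighbours of \<open>b \<in> A\<close> form a clique, so their closed neighbourhoods are nested and
  one of least size is least for inclusion.\<close>

lemma min_X_nbr:
  assumes "b \<in> A" "X_nbrs b \<noteq> {}"
  shows "min_X_nbr b \<in> X" "E (min_X_nbr b) b"
    and "\<And>p. p \<in> X \<Longrightarrow> E p b \<Longrightarrow> NX (min_X_nbr b) \<subseteq> NX p"
proof -
  let ?m = "min_X_nbr b"
  have fin: "finite (X_nbrs b)" using finite_X unfolding X_nbrs_def by simp
  have "?m \<in> X_nbrs b" unfolding min_X_nbr_def by (rule arg_min_if_finite(1)[OF fin assms(2)])
  then show m: "?m \<in> X" "E ?m b" unfolding X_nbrs_def by auto
  show "NX ?m \<subseteq> NX p" if p: "p \<in> X" "E p b" for p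
  proof (cases "p = ?m")
    case False
    have "card (NX ?m) \<le> card (NX p)"
      unfolding min_X_nbr_def
      by (rule arg_min_least[OF fin assms(2)]) (use p in \<open>simp add: X_nbrs_def\<close>)
    moreover have "E ?m p" using A_nbr_private[OF m(1) p(1)] False m(2) p(2) assms(1) by blast
    then have "NX ?m \<subseteq> NX p \<or> NX p \<subseteq> NX ?m" using X_nbhds_nested m(1) p(1) by blast
    moreover have "finite (NX ?m)" using finite_subset[OF closed_nbhd_subset finite_X] .
    ultimately show ?thesis using card_seteq by blast
  qed simp
qed

text \<open>\<open>block v\<close> is the vertex \<open>w\<close> of the basic pair with \<open>v \<in> Q\<^sub>w\<close>; a vertex \<open>b \<in> A\<close> goes to
  \<open>a\<^sub>j\<close> with \<open>j = anchor b\<close>.\<close>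

definition anchor :: "'a \<Rightarrow> nat" where
  "anchor b = (if X_nbrs b = {} then 0 else cls (min_X_nbr b))"

definition block :: "'a \<Rightarrow> nat" where
  "block v = (if v \<in> X then cls v else n_classes + 1 + anchor v)"

lemma anchor_le: "b \<in> A \<Longrightarrow> anchor b \<le> n_classes"
  unfolding anchor_def using cls_in[OF min_X_nbr(1)] by auto

lemma block_X: "p \<in> X \<Longrightarrow> block p = cls p"
  unfolding block_def by simp

lemma block_A: "b \<in> A \<Longrightarrow> block b = n_classes + 1 + anchor b"
  unfolding block_def using disjoint by auto

lemma block_in: "v \<in> V \<Longrightarrow> block v \<in> {1..2 * n_classes + 1}"
  using cls_in anchor_le V_eq unfolding block_def by force


abbreviation basic_edge :: "nat \<Rightarrow> nat \<Rightarrow> bool" where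
  "basic_edge \<equiv> std_edge n_classes quot_edge"

lemma basic_edge_sym: "basic_edge u v \<Longrightarrow> basic_edge v u"
  using simple_graph.edge_sym[OF std_edge_simple_graph[OF symp_quot_edge]] .

lemma basic_edge_X_A:
  "p \<in> X \<Longrightarrow> b \<in> A \<Longrightarrow>
    basic_edge (block p) (block b) \<longleftrightarrow> std_attached n_classes quot_edge (cls p) (anchor b)"
  using std_edge_X_A[OF cls_in anchor_le] block_X block_A by simp

lemma attached_if_adjacent:
  assumes "p \<in> X" "b \<in> A" "E p b"
  shows "std_attached n_classes quot_edge (cls p) (anchor b)"
proof -
  have ne: "X_nbrs b \<noteq> {}" using assms unfolding X_nbrs_def by blast
  let ?m = "min_X_nbr b"
  have m: "?m \<in> X" "E ?m b" "NX ?m \<subseteq> NX p" using min_X_nbr[OF assms(2) ne] assms(1,3) by auto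
  have anchor: "anchor b = cls ?m" using ne unfolding anchor_def by simp
  show ?thesis
  proof (cases "NX ?m = NX p")
    case True
    then have "anchor b = cls p" using cls_eq_iff[OF m(1) assms(1)] anchor by simp
    then show ?thesis using cls_in[OF assms(1)] unfolding std_attached_def by simp
  next
    case False
    then have "E p ?m" using A_nbr_private[OF assms(1) m(1)] assms(2,3) m(2) by blast
    then have "dominated X E ?m p"
      using False m(1,3) unfolding dominated_def closed_nbhd_def by auto
    then show ?thesis
      using dominated_quot[OF assms(1) m(1)] cls_in[OF m(1)] anchor
      unfolding std_attached_def by simp
  qed
qed

lemma adjacent_if_attached:
  assumes "p \<in> X" "b \<in> A" "std_attached n_classes quot_edge (cls p) (anchor b)"
    and "anchor b \<noteq> cls p"
  shows "E p b"
proof -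
  have ne: "X_nbrs b \<noteq> {}" using assms(3) unfolding std_attached_def anchor_def by auto
  let ?m = "min_X_nbr b"
  have m: "?m \<in> X" "E ?m b" using min_X_nbr[OF assms(2) ne] by auto
  have "dominated {1..n_classes} quot_edge (cls ?m) (cls p)"
    using assms(3,4) ne unfolding std_attached_def anchor_def by simp
  then have "NA ?m \<subseteq> NA p"
    using dominated_A_nbhd[OF assms(1) m(1)] dominated_quot[OF assms(1) m(1)] by blast
  then show ?thesis using m(2) assms(2) unfolding NA_def by blast
qed

definition incomplete :: "nat set" where
  "incomplete = {i. \<exists>p\<in>X. \<exists>b\<in>A. cls p = i \<and> anchor b = i \<and> \<not> E p b}"

definition matching :: "nat set set" where
  "matching = {{i, n_classes + 1 + i} | i. i \<in> incomplete}"

lemma incomplete_subset: "incomplete \<subseteq> {1..n_classes}"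
  unfolding incomplete_def using cls_in by blast

lemma edge_imp_basic_edge:
  assumes "p \<in> V" "p' \<in> V" "block p \<noteq> block p'" "E p p'"
  shows "basic_edge (block p) (block p')"
proof -
  have XA: "basic_edge (block u) (block b)" if "u \<in> X" "b \<in> A" "E u b" for u b
    using basic_edge_X_A[OF that(1,2)] attached_if_adjacent[OF that] by blast
  consider "p \<in> X" "p' \<in> X" | "p \<in> X" "p' \<in> A" | "p \<in> A" "p' \<in> X" | "p \<in> A" "p' \<in> A"
    using assms(1,2) V_eq by blast
  then show ?thesis
  proof cases
    case 1
    then show ?thesis
      using quot_edge_cls[OF 1] std_edge_X_X[OF cls_in cls_in] block_X assms(3,4) by simp
  next
    case 2
    then show ?thesis using XA assms(4) by blast
  next
    case 3
    then show ?thesis using XA[OF 3(2,1)] assms(4) basic_edge_sym by (simp add: edge_commute)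
  next
    case 4
    then show ?thesis
      using std_edge_A_A[OF anchor_le anchor_le] block_A assms(3) by simp
  qed
qed

lemma basic_edge_imp_edge:
  assumes "p \<in> V" "p' \<in> V" "block p \<noteq> block p'" "basic_edge (block p) (block p')"
    and "{block p, block p'} \<notin> matching"
  shows "E p p'"
proof -
  have XA: "E u b" if "u \<in> X" "b \<in> A" "basic_edge (block u) (block b)"
    "{block u, block b} \<notin> matching" for u b
  proof (cases "anchor b = cls u")
    case True
    then have "cls u \<notin> incomplete"
      using that(1,2,4) block_X block_A unfolding matching_def by auto
    then show ?thesis using that(1,2) True unfolding incomplete_def by blast
  next
    case False
    then show ?thesis
      using adjacent_if_attached[OF that(1,2)] basic_edge_X_A[OF that(1,2)] that(3) by blast
  qed
  consider "p \<in> X" "p' \<in> X" | "p \<in> X" "p' \<in> A" | "p \<in> A" "p' \<in> X" | "p \<in> A" "p' \<in> A"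
    using assms(1,2) V_eq by blast
  then show ?thesis
  proof cases
    case 1
    then show ?thesis
      using quot_edge_cls[OF 1] std_edge_X_X[OF cls_in cls_in] block_X assms(3,4) by simp
  next
    case 2
    then show ?thesis using XA assms(4,5) by blast
  next
    case 3
    then have "E p' p"
      using XA[OF 3(2,1)] basic_edge_sym[OF assms(4)] assms(5) by (simp add: insert_commute)
    then show ?thesis by (simp add: edge_commute)
  next
    case 4
    then show ?thesis using A_adjacent assms(3) by blast
  qed
qed

lemma block_clique: "clique_in {v \<in> V. block v = w} E"
  unfolding clique_in_def
proof (intro ballI impI)
  fix u v assume u: "u \<in> {v \<in> V. block v = w}" and v: "v \<in> {v \<in> V. block v = w}"
    and "u \<noteq> v"
  consider "u \<in> X" "v \<in> X" | "u \<in> A" "v \<in> A" | "u \<in> X" "v \<in> A" | "u \<in> A" "v \<in> X"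
    using u v V_eq by blast
  then show "E u v"
  proof cases
    case 1
    then have "NX u = NX v" using u v block_X cls_eq_iff by auto
    then show ?thesis using twins_adjacent 1 \<open>u \<noteq> v\<close> by blast
  next
    case 2
    then show ?thesis using A_adjacent \<open>u \<noteq> v\<close> by blast
  next
    case 3
    then show ?thesis using u v cls_in block_X block_A by fastforce
  next
    case 4
    then show ?thesis using u v cls_in block_X block_A by fastforce
  qed
qed

lemma graded_incomplete:
  assumes "i \<in> incomplete"
  shows "graded_pair E {v \<in> V. block v = i} {v \<in> V. block v = n_classes + 1 + i}"
proof -
  let ?P = "{v \<in> V. block v = i}" and ?R = "{v \<in> V. block v = n_classes + 1 + i}"
  have "i \<le> n_classes" using assms incomplete_subset by auto
  then have P: "?P \<subseteq> X" using V_eq block_A by fastforce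
  have R: "?R \<subseteq> A" using V_eq block_X cls_in by fastforce
  have "NA p \<subseteq> NA p' \<or> NA p' \<subseteq> NA p" if "p \<in> ?P" "p' \<in> ?P" for p p'
  proof (cases "p = p'")
    case False
    have "p \<in> X" "p' \<in> X" using that P by auto
    moreover have "cls p = cls p'" using that block_X[OF \<open>p \<in> X\<close>] block_X[OF \<open>p' \<in> X\<close>] by simp
    ultimately have "NX p = NX p'" using cls_eq_iff by blast
    then have "E p p'" using twins_adjacent False \<open>p \<in> X\<close> \<open>p' \<in> X\<close> by blast
    then show ?thesis using A_nbhds_nested \<open>p \<in> X\<close> \<open>p' \<in> X\<close> by blast
  qed simp
  then show ?thesis
    unfolding graded_pair_def NA_def using P R disjoint by blast
qed

lemma incomplete_witness:
  assumes "i \<in> incomplete"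
  obtains p m a where "p \<in> X" "m \<in> X" "a \<in> A" "cls p = i" "cls m = i" "anchor a = i"
    "E p m" "E m a" "\<not> E p a"
proof -
  obtain p a where pa: "p \<in> X" "a \<in> A" "cls p = i" "anchor a = i" "\<not> E p a"
    using assms unfolding incomplete_def by blast
  have "X_nbrs a \<noteq> {}" using pa cls_in[OF pa(1)] unfolding anchor_def by auto
  then have m: "min_X_nbr a \<in> X" "E (min_X_nbr a) a" "cls (min_X_nbr a) = i"
    using min_X_nbr[OF pa(2)] pa(4) unfolding anchor_def by auto
  then have "p \<noteq> min_X_nbr a" using pa(5) by blast
  moreover have "NX p = NX (min_X_nbr a)" using cls_eq_iff pa(1,3) m(1,3) by blast
  ultimately have "E p (min_X_nbr a)" using twins_adjacent pa(1) m(1) by blast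
  then show thesis using that pa m by blast
qed

lemma incomplete_clique:
  assumes "i \<in> incomplete" "i' \<in> incomplete" "i \<noteq> i'"
  shows "quot_edge i i'"
proof (rule ccontr)
  assume no_edge: "\<not> quot_edge i i'"
  obtain p m a where i: "p \<in> X" "m \<in> X" "a \<in> A" "cls p = i" "cls m = i" "anchor a = i"
    "E p m" "E m a" "\<not> E p a"
    using incomplete_witness[OF assms(1)] .
  obtain p' m' b where i': "p' \<in> X" "m' \<in> X" "b \<in> A" "cls p' = i'" "cls m' = i'" "anchor b = i'"
    "E p' m'" "E m' b" "\<not> E p' b"
    using incomplete_witness[OF assms(2)] .
  have cross: "\<not> E u v" "u \<noteq> v" if "u \<in> X" "v \<in> X" "cls u = i" "cls v = i'" for u v
    using quot_edge_cls[OF that(1,2)] no_edge that assms(3) by auto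
  have not_shared: "\<not> E u c" if "u \<in> X" "w \<in> X" "c \<in> A" "E w c" "\<not> E u w" "u \<noteq> w" for u w c
    using A_nbr_private[OF that(2,1)] that by (simp add: edge_commute)
  txt \<open>Then \<open>p m a b m' p'\<close> is an induced \<open>P\<^sub>6\<close>.\<close>
  have "a \<noteq> b" using i(6) i'(6) assms(3) by auto
  then have "E a b" using A_adjacent i(3) i'(3) by blast
  have "\<not> E p b" "\<not> E m b"
    using not_shared[OF i(1) i'(2,3,8)] cross[OF i(1) i'(2) i(4) i'(5)]
      not_shared[OF i(2) i'(2,3,8)] cross[OF i(2) i'(2) i(5) i'(5)] by blast+
  moreover have "\<not> E a p'" "\<not> E a m'"
    using not_shared[OF i'(1) i(2,3,8)] cross[OF i(2) i'(1) i(5) i'(4)]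
      not_shared[OF i'(2) i(2,3,8)] cross[OF i(2) i'(2) i(5) i'(5)]
    by (auto simp: edge_commute)
  moreover have "\<not> E p m'" "\<not> E p p'" "\<not> E m m'" "\<not> E m p'"
    using cross i i' by blast+
  moreover have "\<not> E b p'" using i'(9) by (simp add: edge_commute)
  moreover have "set [p, m, a, b, m', p'] \<subseteq> V" using i i' V_eq by auto
  moreover have "distinct [p, m, a, b, m', p']"
    using cross i i' \<open>a \<noteq> b\<close> disjoint edge_irrefl by auto
  moreover have "E b m'" using i'(8) by (simp add: edge_commute)
  moreover have "E m' p'" using i'(7) by (simp add: edge_commute)
  ultimately show False
    using no_induced_P6[OF P6_free _ _ i(7,8) \<open>E a b\<close>] i(9) by blast
qed

lemma block_edges:
  assumes "u \<noteq> w"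
  shows "(basic_edge u w \<and> {u, w} \<notin> matching \<longrightarrow>
           (\<forall>p\<in>V. \<forall>p'\<in>V. block p = u \<longrightarrow> block p' = w \<longrightarrow> E p p')) \<and>
         (\<not> basic_edge u w \<longrightarrow>
           (\<forall>p\<in>V. \<forall>p'\<in>V. block p = u \<longrightarrow> block p' = w \<longrightarrow> \<not> E p p')) \<and>
         ({u, w} \<in> matching \<longrightarrow> graded_pair E {v \<in> V. block v = u} {v \<in> V. block v = w})"
proof (intro conjI impI ballI)
  show "E p p'" if "basic_edge u w \<and> {u, w} \<notin> matching" "p \<in> V" "p' \<in> V"
    "block p = u" "block p' = w" for p p'
    using basic_edge_imp_edge that assms by blast
  show "\<not> E p p'" if "\<not> basic_edge u w" "p \<in> V" "p' \<in> V" "block p = u" "block p' = w" for p p'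
    using edge_imp_basic_edge that assms by blast
  assume "{u, w} \<in> matching"
  then obtain i where "i \<in> incomplete" "{u, w} = {i, n_classes + 1 + i}"
    unfolding matching_def by blast
  then show "graded_pair E {v \<in> V. block v = u} {v \<in> V. block v = w}"
    using graded_incomplete graded_pair_sym by (auto simp: doubleton_eq_iff)
qed

theorem basic_C_pair_augmentation:
  "basic_C_pair {1..2 * n_classes + 1} basic_edge n_classes (\<lambda>i. i) (\<lambda>j. n_classes + 1 + j) \<and>
   acceptable basic_edge n_classes (\<lambda>i. i) (\<lambda>j. n_classes + 1 + j) matching \<and>
   augmentation V E {1..2 * n_classes + 1} basic_edge matching"
proof (intro conjI)
  show "basic_C_pair {1..2 * n_classes + 1} basic_edge n_classes (\<lambda>i. i) (\<lambda>j. n_classes + 1 + j)"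
    by (rule basic_C_pair_std_edge[OF symp_quot_edge in_C_quot twin_free_quot])
  have "basic_edge i i'" if "i \<in> incomplete" "i' \<in> incomplete" "i \<noteq> i'" for i i'
    using std_edge_X_X incomplete_subset incomplete_clique[OF that] that by blast
  then show "acceptable basic_edge n_classes (\<lambda>i. i) (\<lambda>j. n_classes + 1 + j) matching"
    unfolding acceptable_def matching_def clique_in_def
    using incomplete_subset by (intro exI[of _ incomplete]) auto
  show "augmentation V E {1..2 * n_classes + 1} basic_edge matching"
    unfolding augmentation_def
  proof (intro exI[of _ block] conjI)
    show "\<forall>v\<in>V. block v \<in> {1..2 * n_classes + 1}" using block_in by blast
    show "\<forall>w\<in>{1..2 * n_classes + 1}. clique_in {v \<in> V. block v = w} E" using block_clique by blast
  qed (intro ballI impI block_edges)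
qed

end

theorem theorem2p6:
  fixes V :: "'a set" and E :: "'a \<Rightarrow> 'a \<Rightarrow> bool"
  assumes "C_pair V E"
  shows "\<exists>(W :: nat set) F k x a M. basic_C_pair W F k x a \<and> acceptable F k x a M \<and>
           augmentation V E W F M"
proof -
  obtain X A where graph: "graph V E" and P6: "P_free 6 V E" and chordal: "chordal V E"
    and split: "X \<inter> A = {}" "V = X \<union> A" "clique_in A E" "in_C X E"
    and A_nbrs: "\<forall>x\<in>X. \<exists>a\<in>A. E x a"
      "\<forall>x\<in>X. \<forall>x'\<in>X. x \<noteq> x' \<and> \<not> E x x' \<longrightarrow> \<not> (\<exists>a\<in>A. E x a \<and> E x' a)"
    using assms unfolding C_pair_def by blast
  interpret C_pair_split E V X A
  proof
    show "E v u" if "E u v" for u v using graph that unfolding graph_def by blast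
    show "\<not> E u u" for u using graph unfolding graph_def by blast
    show "finite V" using graph unfolding graph_def by blast
    show "C_free 4 V E" using chordal unfolding chordal_def by simp
    show "\<exists>a\<in>A. E x a" if "x \<in> X" for x using A_nbrs(1) that by blast
    show "\<not> E x' a" if "x \<in> X" "x' \<in> X" "x \<noteq> x'" "\<not> E x x'" "a \<in> A" "E x a" for x x' a
      using A_nbrs(2) that by blast
  qed (fact P6 split)+
  show ?thesis by (intro exI) (rule basic_C_pair_augmentation)
qed

end
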